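(* If $X$ is a Rothberger space satisfying ${\sf S}_1(\mathcal{G}_K,\mathcal{G}_{D_\Gamma})$, then $X$ is productively weakly Rothberger: for every weakly Rothberger space $Y$, $X\times Y$ is weakly Rothberger.
   Context: All spaces are infinite ${\sf T}_1$ topological spaces. $\mathcal{G}_K$ is the family of all collections $\mathcal{U}$ of ${\sf G}_\delta$ subsets of $X$ with $X\notin\mathcal{U}$ such that each compact subset of $X$ is contained in some member of $\mathcal{U}$. $\mathcal{G}_{D_\Gamma}$ is the family of infinite collections $\mathcal{U}$ of ${\sf G}_\delta$ subsets of $X$ such that for each nonempty open $U\subseteq X$, $\{V\in\mathcal{U}:U\cap V=\emptyset\}$ is finite. ${\sf S}_1(\mathcal{A},\mathcal{B})$: for each sequence $(A_n)$ of elements of $\mathcal{A}$ there are $B_n\in A_n$ with $\{B_n:n\in\mathbb{N}\}\in\mathcal{B}$. Rothberger: for each sequence $(\mathcal{U}_n)$ of open covers there are $U_n\in\mathcal{U}_n$ with $\{U_n\}$ a cover. Weakly Rothberger: for each sequence $(\mathcal{U}_n)$ of open covers there are $U_n\in\mathcal{U}_n$ with $\bigcup_nU_n$ dense. *)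

theory Defs
  imports "HOL-Analysis.Analysis"
begin

text \<open>The whole space is the carrier type (UNIV); G-delta sets via the library predicate gdelta.\<close>

definition GK :: "'a::topological_space set set set" where
  "GK = {\<U>. (\<forall>V\<in>\<U>. gdelta V) \<and> UNIV \<notin> \<U> \<and>
             (\<forall>K. compact K \<longrightarrow> (\<exists>V\<in>\<U>. K \<subseteq> V))}"

definition GDGamma :: "'a::topological_space set set set" where
  "GDGamma = {\<U>. infinite \<U> \<and> (\<forall>V\<in>\<U>. gdelta V) \<and>
             (\<forall>W. open W \<and> W \<noteq> {} \<longrightarrow> finite {V\<in>\<U>. W \<inter> V = {}})}"

definition S1 :: "'b set set \<Rightarrow> 'b set set \<Rightarrow> bool" where
  "S1 \<A> \<B> \<longleftrightarrow> (\<forall>A::nat \<Rightarrow> 'b set. (\<forall>n. A n \<in> \<A>) \<longrightarrow>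
      (\<exists>B::nat \<Rightarrow> 'b. (\<forall>n. B n \<in> A n) \<and> range B \<in> \<B>))"

definition open_cover :: "'a::topological_space set set \<Rightarrow> bool" where
  "open_cover \<U> \<longleftrightarrow> (\<forall>V\<in>\<U>. open V) \<and> \<Union>\<U> = UNIV"

definition rothberger :: "'a::topological_space itself \<Rightarrow> bool" where
  "rothberger _ \<longleftrightarrow> (\<forall>\<U>::nat \<Rightarrow> 'a set set. (\<forall>n. open_cover (\<U> n)) \<longrightarrow>
      (\<exists>U. (\<forall>n. U n \<in> \<U> n) \<and> (\<Union>n. U n) = UNIV))"

definition weakly_rothberger :: "'a::topological_space itself \<Rightarrow> bool" where
  "weakly_rothberger _ \<longleftrightarrow> (\<forall>\<U>::nat \<Rightarrow> 'a set set. (\<forall>n. open_cover (\<U> n)) \<longrightarrow>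
      (\<exists>U. (\<forall>n. U n \<in> \<U> n) \<and> closure (\<Union>n. U n) = UNIV))"

end

theory Submission
  imports Defs "HOL-Library.Nat_Bijection"
begin

text \<open>For a compact \<open>K \<subseteq> X\<close> and \<open>y \<in> Y\<close>, the Rothberger property of \<open>X\<close> applied to the
  slice \<open>X \<times> {y}\<close>, together with compactness of \<open>K\<close>, gives an open tube \<open>U \<times> V \<supseteq> K \<times> {y}\<close>
  covered by selections from the covers. Doing this for every \<open>y\<close> yields open covers of \<open>Y\<close>;
  the weak Rothberger property of \<open>Y\<close> picks tubes whose \<open>Y\<close>-sides have dense union, and the
  intersection \<open>G\<close> of their \<open>X\<close>-sides is a \<open>G\<^sub>\<delta>\<close> set containing \<open>K\<close> with \<open>G \<times> Y\<close> inside the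
  closure of the selected sets. Splitting the given covers into countably many subsequences, the
  families of such \<open>G\<close> form a sequence in \<open>\<G>\<^sub>K\<close> (unless one of them contains \<open>X\<close>), and
  \<open>S\<^sub>1(\<G>\<^sub>K, \<G>\<^sub>D\<^sub>\<Gamma>)\<close> selects one \<open>G\<close> per subsequence with dense union.\<close>

lemma merge_selections:
  assumes "\<And>j i. c j i \<in> \<W> (prod_encode (j, i))"
  obtains d where "\<And>n. d n \<in> \<W> n" and "(\<Union>n. d n) = (\<Union>j. \<Union>i. c j i)"
proof
  define d where "d n = case_prod c (prod_decode n)" for n
  show "d n \<in> \<W> n" for n
    using assms[of "fst (prod_decode n)" "snd (prod_decode n)"]
    by (simp add: d_def case_prod_beta)
  show "(\<Union>n. d n) = (\<Union>j. \<Union>i. c j i)"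
    by (auto simp: d_def) (metis prod_encode_inverse case_prod_conv)
qed

lemma closure_Union_GDGamma:
  assumes "\<U> \<in> GDGamma"
  shows "closure (\<Union>\<U>) = UNIV"
proof (rule ccontr)
  assume "closure (\<Union>\<U>) \<noteq> UNIV"
  then have "open (- closure (\<Union>\<U>))" "- closure (\<Union>\<U>) \<noteq> {}" by auto
  then have "finite {V\<in>\<U>. - closure (\<Union>\<U>) \<inter> V = {}}"
    using assms unfolding GDGamma_def by blast
  also have "{V\<in>\<U>. - closure (\<Union>\<U>) \<inter> V = {}} = \<U>"
    using closure_subset[of "\<Union>\<U>"] by blast
  finally show False
    using assms unfolding GDGamma_def by blast
qed

lemma closure_Times_subset_closure:
  assumes "A \<times> B \<subseteq> closure S"
  shows "closure A \<times> closure B \<subseteq> closure S"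
  using assms by (metis closure_Times closure_closure closure_mono)

definition dense_selection_over ::
    "(nat \<Rightarrow> ('a::topological_space \<times> 'b::topological_space) set set) \<Rightarrow> 'a set \<Rightarrow> bool"
  where "dense_selection_over \<W> G \<longleftrightarrow>
    (\<exists>d. (\<forall>n. d n \<in> \<W> n) \<and> G \<times> UNIV \<subseteq> closure (\<Union>n. d n))"

lemma dense_selection_over_Union:
  assumes "\<And>k. dense_selection_over (\<lambda>i. \<W> (prod_encode (k, i))) (Gs k)"
  shows "dense_selection_over \<W> (\<Union>k. Gs k)"
proof -
  obtain D where D: "\<And>k i. D k i \<in> \<W> (prod_encode (k, i))"
    and Gs: "\<And>k. Gs k \<times> UNIV \<subseteq> closure (\<Union>i. D k i)"
    using assms unfolding dense_selection_over_def by metis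
  obtain d where d: "\<And>n. d n \<in> \<W> n" and d_Union: "(\<Union>n. d n) = (\<Union>k. \<Union>i. D k i)"
    using merge_selections[of D \<W>] D by blast
  have "Gs k \<times> UNIV \<subseteq> closure (\<Union>n. d n)" for k
    unfolding d_Union using Gs[of k] closure_mono[of "\<Union>i. D k i" "\<Union>k. \<Union>i. D k i"] by blast
  then show ?thesis
    unfolding dense_selection_over_def using d by blast
qed

lemma S1_GK_GDGamma_dense_selection:
  fixes \<G> :: "nat \<Rightarrow> 'a::topological_space set set"
  assumes "S1 (GK :: 'a set set set) GDGamma"
    and gdelta: "\<And>k G. G \<in> \<G> k \<Longrightarrow> gdelta G"
    and compact_covered: "\<And>k K. compact K \<Longrightarrow> \<exists>G\<in>\<G> k. K \<subseteq> G"
  obtains Gs where "\<And>k. Gs k \<in> \<G> k" and "closure (\<Union>k. Gs k) = UNIV"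
proof (cases "\<exists>k. UNIV \<in> \<G> k")
  case True
  then obtain k0 where "UNIV \<in> \<G> k0" by blast
  moreover obtain Gs where "\<And>k. Gs k \<in> \<G> k"
    using compact_covered[OF compact_empty] by metis
  ultimately show ?thesis
    by (intro that[of "Gs(k0 := UNIV)"]) (auto simp: top_unique)
next
  case False
  then have "\<G> k \<in> GK" for k
    using gdelta compact_covered unfolding GK_def by blast
  then obtain Gs where "\<And>k. Gs k \<in> \<G> k" "range Gs \<in> GDGamma"
    using assms(1) unfolding S1_def by blast
  then show ?thesis
    using that closure_Union_GDGamma by blast
qed

lemma rothberger_selection_tube:
  fixes \<W> :: "nat \<Rightarrow> ('a::topological_space \<times> 'b::topological_space) set set"
  assumes "rothberger TYPE('a)" and cov: "\<And>n. open_cover (\<W> n)" and "compact K"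
  obtains U V c where "open U" "K \<subseteq> U" "open V" "y \<in> V" "\<And>n. c n \<in> \<W> n"
    "U \<times> V \<subseteq> (\<Union>n. c n)"
proof -
  define \<O> where "\<O> n = {U. open U \<and> (\<exists>V w. open V \<and> y \<in> V \<and> w \<in> \<W> n \<and> U \<times> V \<subseteq> w)}" for n
  have "open_cover (\<O> n)" for n
  proof -
    have "\<exists>U\<in>\<O> n. x \<in> U" for x
    proof -
      have "(x, y) \<in> \<Union>(\<W> n)"
        using cov[of n] unfolding open_cover_def by simp
      then obtain w where w: "w \<in> \<W> n" "(x, y) \<in> w"
        by blast
      moreover have "open w"
        using w cov[of n] unfolding open_cover_def by blast
      ultimately obtain A B where "open A" "open B" "(x, y) \<in> A \<times> B" "A \<times> B \<subseteq> w"
        using open_prod_elim by metis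
      then show ?thesis
        using w unfolding \<O>_def by blast
    qed
    then show ?thesis unfolding open_cover_def \<O>_def by auto
  qed
  then obtain Us where Us: "\<And>n. Us n \<in> \<O> n" and Us_cover: "(\<Union>n. Us n) = UNIV"
    using assms(1)[unfolded rothberger_def, rule_format, of \<O>] by blast
  have open_Us: "open (Us n)" for n
    using Us unfolding \<O>_def by blast
  obtain F where F: "finite F" "K \<subseteq> (\<Union>n\<in>F. Us n)"
    by (rule compactE_image[OF \<open>compact K\<close>, of UNIV Us]) (use open_Us Us_cover in auto)
  have "\<forall>n. \<exists>V w. open V \<and> y \<in> V \<and> w \<in> \<W> n \<and> Us n \<times> V \<subseteq> w"
    using Us unfolding \<O>_def by blast
  then obtain Vs c where Vc: "\<And>n. open (Vs n) \<and> y \<in> Vs n \<and> c n \<in> \<W> n \<and> Us n \<times> Vs n \<subseteq> c n"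
    by metis
  show ?thesis
  proof
    show "open (\<Union>n\<in>F. Us n)"
      using open_Us by auto
    show "open (\<Inter>n\<in>F. Vs n)" "y \<in> (\<Inter>n\<in>F. Vs n)"
      using F(1) Vc by auto
    show "(\<Union>n\<in>F. Us n) \<times> (\<Inter>n\<in>F. Vs n) \<subseteq> (\<Union>n. c n)"
      using Vc by blast
  qed (use F Vc in auto)
qed

lemma rothberger_weakly_rothberger_gdelta_dense_selection:
  fixes \<W> :: "nat \<Rightarrow> ('a::topological_space \<times> 'b::topological_space) set set"
  assumes rX: "rothberger TYPE('a)" and wY: "weakly_rothberger TYPE('b)"
    and cov: "\<And>n. open_cover (\<W> n)" and "compact K"
  obtains G where "gdelta G" "K \<subseteq> G" "dense_selection_over \<W> G"
proof -
  define \<V> where "\<V> j = {V. open V \<and> (\<exists>U c. open U \<and> K \<subseteq> U \<and>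
     (\<forall>i. c i \<in> \<W> (prod_encode (j, i))) \<and> U \<times> V \<subseteq> (\<Union>i. c i))}" for j
  have "open_cover (\<V> j)" for j
  proof -
    have "\<exists>V\<in>\<V> j. y \<in> V" for y
    proof -
      obtain U V c where "open U" "K \<subseteq> U" "open V" "y \<in> V"
        "\<And>i. c i \<in> \<W> (prod_encode (j, i))" "U \<times> V \<subseteq> (\<Union>i. c i)"
        using rothberger_selection_tube[where \<W> = "\<lambda>i. \<W> (prod_encode (j, i))",
            OF rX cov \<open>compact K\<close>] by metis
      then show ?thesis
        unfolding \<V>_def by blast
    qed
    then show ?thesis unfolding open_cover_def \<V>_def by auto
  qed
  then obtain Vs where Vs: "\<And>j. Vs j \<in> \<V> j" and dense: "closure (\<Union>j. Vs j) = UNIV"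
    using wY[unfolded weakly_rothberger_def, rule_format, of \<V>] by blast
  have "\<forall>j. \<exists>U c. open U \<and> K \<subseteq> U \<and> (\<forall>i. c i \<in> \<W> (prod_encode (j, i))) \<and>
      U \<times> Vs j \<subseteq> (\<Union>i. c i)"
    using Vs unfolding \<V>_def by blast
  then obtain Us c where Uc: "\<And>j. open (Us j) \<and> K \<subseteq> Us j \<and>
      (\<forall>i. c j i \<in> \<W> (prod_encode (j, i))) \<and> Us j \<times> Vs j \<subseteq> (\<Union>i. c j i)"
    by metis
  then obtain d where d: "\<And>n. d n \<in> \<W> n" and d_Union: "(\<Union>n. d n) = (\<Union>j. \<Union>i. c j i)"
    using merge_selections[of c \<W>] by blast
  have "(\<Inter>j. Us j) \<times> (\<Union>j. Vs j) \<subseteq> (\<Union>n. d n)"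
    unfolding d_Union using Uc by fast
  then have "closure (\<Inter>j. Us j) \<times> closure (\<Union>j. Vs j) \<subseteq> closure (\<Union>n. d n)"
    using closure_Times_subset_closure closure_subset by blast
  then have "dense_selection_over \<W> (\<Inter>j. Us j)"
    unfolding dense_selection_over_def using dense closure_subset d by blast
  moreover have "gdelta (\<Inter>j. Us j)"
    using Uc by (auto intro: gdelta.intros)
  moreover have "K \<subseteq> (\<Inter>j. Us j)"
    using Uc by blast
  ultimately show ?thesis
    using that by blast
qed

theorem theorem5p16:
  assumes "infinite (UNIV :: 'a::t1_space set)"
    and "rothberger TYPE('a)"
    and "S1 (GK :: 'a set set set) GDGamma"
    and "infinite (UNIV :: 'b::t1_space set)"
    and "weakly_rothberger TYPE('b)"
  shows "weakly_rothberger TYPE('a \<times> 'b)"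
  unfolding weakly_rothberger_def
proof (intro allI impI)
  fix \<W> :: "nat \<Rightarrow> ('a \<times> 'b) set set"
  assume cov: "\<forall>n. open_cover (\<W> n)"
  define \<G> where "\<G> k = {G. gdelta G \<and> dense_selection_over (\<lambda>i. \<W> (prod_encode (k, i))) G}" for k
  have compact_covered: "\<exists>G\<in>\<G> k. K \<subseteq> G" if "compact K" for k K
    using rothberger_weakly_rothberger_gdelta_dense_selection[where \<W> = "\<lambda>i. \<W> (prod_encode (k, i))",
        OF assms(2,5) _ that] cov unfolding \<G>_def by (metis (mono_tags, lifting) mem_Collect_eq)
  obtain Gs where "\<And>k. Gs k \<in> \<G> k" and dense: "closure (\<Union>k. Gs k) = UNIV"
    by (rule S1_GK_GDGamma_dense_selection[OF assms(3), of \<G>])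
      (use compact_covered in \<open>auto simp: \<G>_def\<close>)
  then obtain U where U: "\<And>n. U n \<in> \<W> n" and Gs_U: "(\<Union>k. Gs k) \<times> UNIV \<subseteq> closure (\<Union>n. U n)"
    using dense_selection_over_Union[of \<W> Gs] unfolding \<G>_def dense_selection_over_def by blast
  have "closure (\<Union>k. Gs k) \<times> closure UNIV \<subseteq> closure (\<Union>n. U n)"
    using Gs_U by (rule closure_Times_subset_closure)
  then have "closure (\<Union>n. U n) = UNIV"
    using dense by (simp add: top_unique)
  then show "\<exists>U. (\<forall>n. U n \<in> \<W> n) \<and> closure (\<Union>n. U n) = UNIV"
    using U by blast
qed

end
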